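(* Let $n\ge 2$ be an integer and let $G_n=\langle a,b \mid (ab)^n\rangle$. For every rational number $s\in[1/n,1]$ and every nonzero integer $t$, the element $u_s$ is not conjugate in $G_n$ to $a^t$ nor to $b^t$. (That is, $\alpha_s$ is not peripheral in the even Heckoid orbifold of index $n$ for the trivial knot.)
   Context: Words $u_s\in F(a,b)$ for rational $0<s\le1$: write $s=q/p$ with $p\ge1$, $\gcd(p,q)=1$, and set $\epsilon_i=(-1)^{\lfloor iq/p\rfloor}$ for $1\le i\le p-1$. If $p$ is odd, $u_{q/p}=a\,\hat u\, b^{(-1)^q}\,\hat u^{-1}$ with $\hat u=b^{\epsilon_1}a^{\epsilon_2}\cdots b^{\epsilon_{p-2}}a^{\epsilon_{p-1}}$ (letters alternate $b,a,\dots$; empty if $p=1$). If $p$ is even, $u_{q/p}=a\,\hat u\,a^{-1}\,\hat u^{-1}$ with $\hat u=b^{\epsilon_1}a^{\epsilon_2}\cdots a^{\epsilon_{p-2}}b^{\epsilon_{p-1}}$. The generators $a,b$ are meridians; a loop is peripheral iff it represents the conjugacy class of a power of a meridian. *)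

theory Defs
  imports Complex_Main
begin

text \<open>Words in the free group F(a,b). A letter is a generator together with a sign
  (True = the generator, False = its inverse).\<close>

datatype gen = GA | GB

type_synonym letter = "gen \<times> bool"
type_synonym word = "letter list"

definition inv_letter :: "letter \<Rightarrow> letter" where
  "inv_letter l = (fst l, \<not> snd l)"

definition inv_word :: "word \<Rightarrow> word" where
  "inv_word w = rev (map inv_letter w)"

definition gpow :: "gen \<Rightarrow> int \<Rightarrow> word" where
  "gpow x t = replicate (nat \<bar>t\<bar>) (x, t \<ge> 0)"

definition relator :: "nat \<Rightarrow> word" where
  "relator n = concat (replicate n [(GA, True), (GB, True)])"

inductive Gstep :: "nat \<Rightarrow> word \<Rightarrow> word \<Rightarrow> bool" for n where
  ins_pair: "Gstep n (x @ y) (x @ [l, inv_letter l] @ y)"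
| ins_rel: "Gstep n (x @ y) (x @ relator n @ y)"

definition Geq :: "nat \<Rightarrow> word \<Rightarrow> word \<Rightarrow> bool" where
  "Geq n = (sup (Gstep n) (Gstep n)\<inverse>\<inverse>)\<^sup>*\<^sup>*"

definition Gconj :: "nat \<Rightarrow> word \<Rightarrow> word \<Rightarrow> bool" where
  "Gconj n u v = (\<exists>g. Geq n (g @ u @ inv_word g) v)"

text \<open>The words u_s. For s = q/p in lowest terms (p \<ge> 1), epsilon_i = (-1)^floor(iq/p);
  hat u has letters b^eps1 a^eps2 b^eps3 ..., i = 1..p-1 (b at odd i, a at even i).\<close>
definition eps :: "int \<Rightarrow> int \<Rightarrow> nat \<Rightarrow> bool" where
  "eps q p i = even ((int i * q) div p)"

definition uhat :: "int \<Rightarrow> int \<Rightarrow> word" where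
  "uhat q p = map (\<lambda>i. (if odd i then GB else GA, eps q p i)) [1..<nat p]"

definition u_word :: "rat \<Rightarrow> word" where
  "u_word s = (let (q, p) = quotient_of s in
     if odd p then [(GA, True)] @ uhat q p @ [(GB, even q)] @ inv_word (uhat q p)
     else [(GA, True)] @ uhat q p @ [(GA, False)] @ inv_word (uhat q p))"

end

theory Submission
  imports Defs
begin

text \<open>The abelianization of \<open>G\<^sub>n = \<langle>a, b | (ab)\<^sup>n\<rangle>\<close> is \<open>\<int>\<^sup>2 / \<langle>(n, n)\<rangle> \<cong> \<int> \<times> \<int>/n\<close>, via
  \<open>w \<mapsto> (\<sigma>\<^sub>a w - \<sigma>\<^sub>b w, \<sigma>\<^sub>a w mod n)\<close> with \<open>\<sigma>\<^sub>x\<close> the exponent sum of \<open>x\<close>; it is a conjugacy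
  invariant. Every \<open>u\<^sub>s\<close> has exponent sums \<open>(1, \<plusminus>1)\<close> (odd denominator) or \<open>(0, 0)\<close>
  (even denominator), while \<open>a\<^sup>t\<close> and \<open>b\<^sup>t\<close> have \<open>(t, 0)\<close> and \<open>(0, t)\<close>; for \<open>n \<ge> 2\<close> and
  \<open>t \<noteq> 0\<close> these never have the same image.\<close>

definition exponent_sum :: "gen \<Rightarrow> word \<Rightarrow> int" where
  "exponent_sum x w = sum_list (map (\<lambda>l. if fst l = x then (if snd l then 1 else -1) else 0) w)"

lemma exponent_sum_Nil [simp]: "exponent_sum x [] = 0"
  by (simp add: exponent_sum_def)

lemma exponent_sum_Cons [simp]:
  "exponent_sum x (l # w) = (if fst l = x then (if snd l then 1 else -1) else 0) + exponent_sum x w"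
  by (simp add: exponent_sum_def)

lemma exponent_sum_append [simp]: "exponent_sum x (u @ v) = exponent_sum x u + exponent_sum x v"
  by (simp add: exponent_sum_def)

lemma exponent_sum_inv_word [simp]: "exponent_sum x (inv_word w) = - exponent_sum x w"
  by (induction w) (auto simp: inv_word_def inv_letter_def)

lemma exponent_sum_relator [simp]: "exponent_sum x (relator n) = int n"
  by (induction n) (cases x; auto simp: relator_def)+

lemma exponent_sum_gpow [simp]: "exponent_sum x (gpow y t) = (if x = y then t else 0)"
  by (auto simp: gpow_def exponent_sum_def sum_list_replicate)

lemma exponent_sum_u_word:
  assumes "quotient_of s = (q, p)"
  shows "exponent_sum GA (u_word s) = (if odd p then 1 else 0)"
    and "exponent_sum GB (u_word s) = (if odd p then (if even q then 1 else -1) else 0)"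
  using assms by (auto simp: u_word_def)

definition abelianization :: "nat \<Rightarrow> word \<Rightarrow> int \<times> int" where
  "abelianization n w = (exponent_sum GA w - exponent_sum GB w, exponent_sum GA w mod int n)"

lemma Geq_invariant:
  assumes "Geq n u v" and "\<And>u v. Gstep n u v \<Longrightarrow> f u = f v"
  shows "f u = f v"
  using assms(1) unfolding Geq_def
  by (induction rule: rtranclp_induct) (auto dest: assms(2))

lemma abelianization_Gstep: "Gstep n u v \<Longrightarrow> abelianization n u = abelianization n v"
proof (induction rule: Gstep.induct)
  case (ins_rel x y)
  have "exponent_sum GA (x @ relator n @ y) = exponent_sum GA (x @ y) + int n"
    by simp
  then show ?case by (simp add: abelianization_def add.left_commute)
qed (simp add: abelianization_def inv_letter_def)

lemma abelianization_Gconj: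
  assumes "Gconj n u v"
  shows "abelianization n u = abelianization n v"
proof -
  obtain g where "Geq n (g @ u @ inv_word g) v"
    using assms by (auto simp: Gconj_def)
  then have "abelianization n (g @ u @ inv_word g) = abelianization n v"
    by (rule Geq_invariant) (rule abelianization_Gstep)
  then show ?thesis by (simp add: abelianization_def)
qed

lemma not_Gconj_u_word_gpow:
  assumes "n \<ge> 2" and "t \<noteq> 0"
  shows "\<not> Gconj n (u_word s) (gpow x t)"
proof
  assume "Gconj n (u_word s) (gpow x t)"
  then have ab: "abelianization n (u_word s) = abelianization n (gpow x t)"
    by (rule abelianization_Gconj)
  obtain q p where qp: "quotient_of s = (q, p)"
    by (cases "quotient_of s") auto
  have one_mod: "(1::int) mod int n = 1" "(2::int) mod int n \<noteq> 1"
    using assms(1) by (cases "n = 2"; simp)+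
  show False
    using ab one_mod assms(2)
    by (cases x) (auto simp: abelianization_def exponent_sum_u_word[OF qp] split: if_splits)
qed

theorem theorem2p2:
  fixes n :: nat and s :: rat and t :: int
  assumes "n \<ge> 2" and "1 / of_nat n \<le> s" and "s \<le> 1" and "t \<noteq> 0"
  shows "\<not> Gconj n (u_word s) (gpow GA t) \<and> \<not> Gconj n (u_word s) (gpow GB t)"
  using not_Gconj_u_word_gpow[OF assms(1,4)] by blast

end
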